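(* In the setting of the EM iteration $\mathbf p_{n+1}=T(\mathbf p_n)$ with $$T(\mathbf p)_j=(n+m)^{-1}\Big(\xi_j+\frac{p_j}{W(t_j)}\sum_{k\le j}\frac{\zeta_k}{\sum_{l\ge k}p_l/W(t_l)}\Big)$$ for maximizing $\mathcal L(\mathbf p)=\prod_{j=1}^h p_j^{\xi_j}\big(\sum_{k\ge j} p_k/W(t_k)\big)^{\zeta_j}$ over the probability simplex (where $0<t_1<\dots<t_h$, $W$ positive nondecreasing, $\xi_j,\zeta_j$ nonnegative integers with $\xi_j+\zeta_j\ge1$, $m=\sum\xi_j$, $n=\sum\zeta_j$), suppose the (unique) maximizer $\mathbf p^*$ of $\mathcal L$ over the simplex satisfies $p^*_j>0$ for all $j=1,\dots,h$. Then for any starting point $\mathbf p_0$ in the simplex with all coordinates positive, the iterates $\mathbf p_n$ converge to $\mathbf p^*$.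
   Context: $\xi_j,\zeta_j$ are the multiplicities of uncensored and censored observations at $t_j$; $\mathbf p$ gives the masses at $t_1,\dots,t_h$ of a discrete distribution. *)

theory Defs
  imports "HOL-Analysis.Analysis"
begin

text \<open>Indices run over 1..h. A point p : nat => real is meaningful on 1..h only.\<close>

definition em_simplex :: "nat \<Rightarrow> (nat \<Rightarrow> real) set" where
  "em_simplex h = {p. (\<forall>j\<in>{1..h}. 0 \<le> p j) \<and> (\<Sum>j=1..h. p j) = 1}"

definition em_tail :: "nat \<Rightarrow> (nat \<Rightarrow> real) \<Rightarrow> (real \<Rightarrow> real) \<Rightarrow> (nat \<Rightarrow> real) \<Rightarrow> nat \<Rightarrow> real" where
  "em_tail h t W p k = (\<Sum>l=k..h. p l / W (t l))"

definition em_lik :: "nat \<Rightarrow> (nat \<Rightarrow> real) \<Rightarrow> (real \<Rightarrow> real) \<Rightarrow> (nat \<Rightarrow> nat) \<Rightarrow> (nat \<Rightarrow> nat)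
    \<Rightarrow> (nat \<Rightarrow> real) \<Rightarrow> real" where
  "em_lik h t W xi zeta p = (\<Prod>j=1..h. p j ^ xi j * em_tail h t W p j ^ zeta j)"

definition em_T :: "nat \<Rightarrow> (nat \<Rightarrow> real) \<Rightarrow> (real \<Rightarrow> real) \<Rightarrow> (nat \<Rightarrow> nat) \<Rightarrow> (nat \<Rightarrow> nat)
    \<Rightarrow> (nat \<Rightarrow> real) \<Rightarrow> (nat \<Rightarrow> real)" where
  "em_T h t W xi zeta p = (\<lambda>j. (xi j + p j / W (t j) *
      (\<Sum>k=1..j. real (zeta k) / em_tail h t W p k))
      / (real (\<Sum>i=1..h. zeta i) + real (\<Sum>i=1..h. xi i)))"

end

theory Submission
  imports Defs
begin

text \<open>
  Write P for the maximizer (positive by hypothesis) and T for the EM map.  The proof has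
  four parts.
  (1) T maps the open simplex into itself: the censored mass zeta_k is redistributed over the
      tail k..h proportionally to p_l / W(t_l) (lemma em_redistribute).
  (2) An ascent inequality obtained from ln x <= x - 1 term by term:
        ln L(P) - ln L(p) <= N * sum_j T(P)_j * (ln T(p)_j - ln p_j).
      With V(p) = - N * sum_j T(P)_j * ln p_j this bounds the likelihood gap at p_n by
      V(p_n) - V(p_(n+1)); Gibbs' inequality bounds V from below, so the gaps are summable
      and L(p_n) tends to L(P).
  (3) The maximizer is unique: AM-GM at the midpoint of P and any other maximizer q forces
      equality of every observed factor, and a backward induction over the tails gives q = P.
  (4) Compactness: every coordinatewise convergent subsequence of the (bounded) iterates has
      a limit q in the simplex with L(q) = L(P) by continuity, so q = P by (3).
\<close>

lemma sum_triangle_swap: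
  fixes f :: "nat \<Rightarrow> nat \<Rightarrow> 'a::comm_monoid_add"
  shows "(\<Sum>j=1..h. \<Sum>k=1..j. f k j) = (\<Sum>k=1..h. \<Sum>j=k..h. f k j)"
proof (induction h)
  case 0
  then show ?case by simp
next
  case (Suc h)
  have "(\<Sum>j=1..Suc h. \<Sum>k=1..j. f k j)
      = (\<Sum>k=1..h. \<Sum>j=k..h. f k j) + (\<Sum>k=1..Suc h. f k (Suc h))"
    using Suc by simp
  also have "\<dots> = (\<Sum>k=1..h. (\<Sum>j=k..h. f k j) + f k (Suc h)) + f (Suc h) (Suc h)"
    by (simp add: sum.distrib add.assoc)
  also have "\<dots> = (\<Sum>k=1..Suc h. \<Sum>j=k..Suc h. f k j)"
    by (simp add: add.commute)
  finally show ?case .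
qed

lemma mult_eq_mono_factors:
  fixes a b c d :: real
  assumes "0 < a" "a \<le> c" "0 < b" "b \<le> d" "a * b = c * d"
  shows "a = c \<and> b = d"
proof -
  have "a * b \<le> a * d" "a * d \<le> c * d"
    using assms(1-4) by (auto intro: mult_left_mono mult_right_mono)
  then have "a * b = a * d" "a * d = c * d"
    using assms(5) by linarith+
  moreover have "0 < d"
    using assms by linarith
  ultimately have "a = c" "b = d"
    using assms(1) by (simp_all add: mult_right_cancel mult_left_cancel)
  then show ?thesis ..
qed

lemma prod_eq_factors:
  fixes f g :: "'a \<Rightarrow> real"
  assumes "finite A" "\<forall>i\<in>A. 0 < g i \<and> g i \<le> f i" "prod g A = prod f A"
  shows "\<forall>i\<in>A. g i = f i"
  using assms
proof (induction A rule: finite_induct)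
  case empty
  then show ?case by simp
next
  case (insert x F)
  have F: "\<forall>i\<in>F. 0 < g i \<and> g i \<le> f i"
    using insert.prems(1) by blast
  have "g x = f x \<and> prod g F = prod f F"
  proof (rule mult_eq_mono_factors)
    show "0 < prod g F" using F by (intro prod_pos) blast
    show "prod g F \<le> prod f F" using F by (intro prod_mono) (blast intro: less_imp_le)
    show "g x * prod g F = f x * prod f F" using insert by simp
  qed (use insert.prems(1) in auto)
  then show ?case
    using insert.IH F by blast
qed

lemma amgm_power:
  fixes a b :: real
  assumes "0 \<le> a" "0 \<le> b"
  shows "(a * b) ^ n \<le> ((a + b) / 2 * ((a + b) / 2)) ^ n"
proof (rule power_mono)
  have "(a + b) / 2 * ((a + b) / 2) - a * b = ((a - b) / 2)\<^sup>2"
    by (simp add: power2_eq_square field_simps)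
  then show "a * b \<le> (a + b) / 2 * ((a + b) / 2)"
    by (metis diff_ge_0_iff_ge zero_le_power2)
qed (use assms in simp)

lemma amgm_power_eq:
  fixes a b :: real
  assumes "0 \<le> a" "0 \<le> b" "0 < n" "(a * b) ^ n = ((a + b) / 2 * ((a + b) / 2)) ^ n"
  shows "a = b"
proof -
  have "a * b = (a + b) / 2 * ((a + b) / 2)"
    using assms by (simp add: power_eq_iff_eq_base)
  then have "((a - b) / 2)\<^sup>2 = 0"
    by (simp add: power2_eq_square field_simps)
  then show ?thesis by simp
qed

lemma amgm_factors_eq:
  fixes a b c d :: real
  assumes nonneg: "0 \<le> a" "0 \<le> b" "0 \<le> c" "0 \<le> d"
    and pos: "0 < (a * b) ^ n * (c * d) ^ k"
    and eq: "(a * b) ^ n * (c * d) ^ k = ((a + b) / 2 * ((a + b) / 2)) ^ n * ((c + d) / 2 * ((c + d) / 2)) ^ k"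
  shows "(0 < n \<longrightarrow> a = b) \<and> (0 < k \<longrightarrow> c = d)"
proof -
  have nn: "0 \<le> (a * b) ^ n" "0 \<le> (c * d) ^ k"
    using nonneg by simp_all
  have "(a * b) ^ n \<noteq> 0" "(c * d) ^ k \<noteq> 0"
    using pos by (metis less_irrefl mult_zero_left, metis less_irrefl mult_zero_right)
  then have pos_ab: "0 < (a * b) ^ n" and pos_cd: "0 < (c * d) ^ k"
    using nn by linarith+
  have "(a * b) ^ n = ((a + b) / 2 * ((a + b) / 2)) ^ n \<and> (c * d) ^ k = ((c + d) / 2 * ((c + d) / 2)) ^ k"
    using mult_eq_mono_factors[OF pos_ab amgm_power pos_cd amgm_power eq] nonneg by blast
  then show ?thesis
    using amgm_power_eq nonneg by blast
qed

text \<open>The inequality ln x <= x - 1 with x = a / b, weighted by c >= 0; the only analytic input of the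
  ascent inequality.\<close>
lemma ln_ratio_lower_bound:
  fixes a b c :: real
  assumes "0 \<le> c" "0 < a" "0 < b"
  shows "c - c * a / b \<le> c * (ln b - ln a)"
proof -
  have "ln (a / b) \<le> a / b - 1"
    using assms by (intro ln_le_minus_one) auto
  then have "1 - a / b \<le> ln b - ln a"
    using assms by (simp add: ln_div)
  then have "c * (1 - a / b) \<le> c * (ln b - ln a)"
    using assms(1) by (rule mult_left_mono)
  then show ?thesis
    by (simp add: right_diff_distrib)
qed

lemma gibbs_inequality:
  fixes r p :: "'a \<Rightarrow> real"
  assumes "\<forall>j\<in>A. 0 < r j" "\<forall>j\<in>A. 0 < p j" "sum p A = sum r A"
  shows "(\<Sum>j\<in>A. r j * ln (p j)) \<le> (\<Sum>j\<in>A. r j * ln (r j))"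
proof -
  have "(\<Sum>j\<in>A. r j - p j) \<le> (\<Sum>j\<in>A. r j * (ln (r j) - ln (p j)))"
  proof (rule sum_mono)
    fix j assume "j \<in> A"
    then show "r j - p j \<le> r j * (ln (r j) - ln (p j))"
      using ln_ratio_lower_bound[of "r j" "p j" "r j"] assms by auto
  qed
  then show ?thesis
    using assms(3) by (simp add: sum_subtractf right_diff_distrib)
qed

lemma descent_LIMSEQ_zero:
  fixes d V :: "nat \<Rightarrow> real"
  assumes "\<And>n. 0 \<le> d n" "\<And>n. d n \<le> V n - V (Suc n)" "\<And>n. B \<le> V n"
  shows "d \<longlonglongrightarrow> 0"
proof -
  have "(\<Sum>i<M. d i) \<le> V 0 - B" for M
  proof -
    have "(\<Sum>i<M. d i) \<le> (\<Sum>i<M. V i - V (Suc i))"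
      by (intro sum_mono assms(2))
    also have "\<dots> = V 0 - V M"
      by (rule sum_lessThan_telescope')
    finally show ?thesis
      using assms(3)[of M] by linarith
  qed
  then have "summable d"
    using assms(1) by (intro summableI_nonneg_bounded) auto
  then show ?thesis
    by (rule summable_LIMSEQ_zero)
qed

lemma bounded_coordinates_convergent_subseq:
  fixes X :: "nat \<Rightarrow> 'a \<Rightarrow> real"
  assumes "finite J" "\<forall>n. \<forall>j\<in>J. \<bar>X n j\<bar> \<le> B"
  shows "\<exists>r q. strict_mono r \<and> (\<forall>j\<in>J. (\<lambda>n. X (r n) j) \<longlonglongrightarrow> q j)"
  using assms
proof (induction J rule: finite_induct)
  case empty
  have "strict_mono (id :: nat \<Rightarrow> nat)" by (simp add: strict_mono_def)
  then show ?case by blast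
next
  case (insert x F)
  obtain r q where r: "strict_mono r" and q: "\<forall>j\<in>F. (\<lambda>n. X (r n) j) \<longlonglongrightarrow> q j"
    using insert by blast
  obtain s where s: "strict_mono s" "monoseq (\<lambda>n. X (r (s n)) x)"
    using seq_monosub[of "\<lambda>n. X (r n) x"] by blast
  have "Bseq (\<lambda>n. X (r (s n)) x)"
    using insert.prems by (intro BseqI'[of _ B]) auto
  then obtain l where l: "(\<lambda>n. X (r (s n)) x) \<longlonglongrightarrow> l"
    using s(2) Bseq_monoseq_convergent convergent_def by blast
  have "(\<lambda>n. X (r (s n)) j) \<longlonglongrightarrow> (q(x := l)) j" if "j \<in> insert x F" for j
  proof (cases "j = x")
    case False
    then have "((\<lambda>n. X (r n) j) \<circ> s) \<longlonglongrightarrow> q j"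
      using q that s(1) by (intro LIMSEQ_subseq_LIMSEQ) auto
    then show ?thesis
      using False by (simp add: o_def)
  qed (use l in simp)
  moreover have "strict_mono (r \<circ> s)"
    using r s(1) by (rule strict_mono_o)
  ultimately show ?case
    by (intro exI[of _ "r \<circ> s"] exI[of _ "q(x := l)"]) (auto simp: o_def)
qed

lemma coordinates_LIMSEQ_by_subseq_limits:
  fixes X :: "nat \<Rightarrow> 'a \<Rightarrow> real"
  assumes J: "finite J" and bounded: "\<forall>n. \<forall>j\<in>J. \<bar>X n j\<bar> \<le> B"
    and limits: "\<And>r q. strict_mono r \<Longrightarrow> \<forall>j\<in>J. (\<lambda>n. X (r n) j) \<longlonglongrightarrow> q j \<Longrightarrow> \<forall>j\<in>J. q j = P j"
  shows "\<forall>j\<in>J. (\<lambda>n. X n j) \<longlonglongrightarrow> P j"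
proof (rule ballI, rule ccontr)
  fix j0 assume j0: "j0 \<in> J" and "\<not> (\<lambda>n. X n j0) \<longlonglongrightarrow> P j0"
  then obtain e where e: "0 < e" "\<forall>M. \<exists>n\<ge>M. e \<le> \<bar>X n j0 - P j0\<bar>"
    unfolding LIMSEQ_iff real_norm_def by (meson not_less)
  then have "infinite {n. e \<le> \<bar>X n j0 - P j0\<bar>}"
    by (simp add: infinite_nat_iff_unbounded_le)
  then obtain \<sigma> :: "nat \<Rightarrow> nat" where \<sigma>: "strict_mono \<sigma>" "\<forall>n. e \<le> \<bar>X (\<sigma> n) j0 - P j0\<bar>"
    using infinite_enumerate by blast
  obtain r q where r: "strict_mono r" and q: "\<forall>j\<in>J. (\<lambda>n. X (\<sigma> (r n)) j) \<longlonglongrightarrow> q j"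
    using bounded_coordinates_convergent_subseq[OF J, of "\<lambda>n. X (\<sigma> n)" B] bounded by blast
  have "q j0 = P j0"
    using limits[OF strict_mono_o[OF \<sigma>(1) r]] q j0 by simp
  moreover have "(\<lambda>n. \<bar>X (\<sigma> (r n)) j0 - P j0\<bar>) \<longlonglongrightarrow> \<bar>q j0 - P j0\<bar>"
    using q j0 by (intro tendsto_intros) auto
  then have "e \<le> \<bar>q j0 - P j0\<bar>"
    using \<sigma>(2) by (intro LIMSEQ_le_const) auto
  ultimately show False
    using e(1) by simp
qed

lemma em_simplex_coord_bound:
  assumes "p \<in> em_simplex h" "j \<in> {1..h}"
  shows "\<bar>p j\<bar> \<le> 1"
proof -
  have "p j \<le> (\<Sum>i=1..h. p i)"
    using assms by (intro member_le_sum) (auto simp: em_simplex_def)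
  then show ?thesis
    using assms by (auto simp: em_simplex_def)
qed

lemma em_simplex_limit:
  assumes X: "\<And>n. X n \<in> em_simplex h" and lim: "\<forall>j\<in>{1..h}. (\<lambda>n. X n j) \<longlonglongrightarrow> q j"
  shows "q \<in> em_simplex h"
proof -
  have "0 \<le> q j" if j: "j \<in> {1..h}" for j
  proof (rule LIMSEQ_le_const)
    show "(\<lambda>n. X n j) \<longlonglongrightarrow> q j"
      using lim j by blast
    show "\<exists>N. \<forall>n\<ge>N. 0 \<le> X n j"
      using X j by (auto simp: em_simplex_def)
  qed
  moreover have "(\<lambda>n. \<Sum>j=1..h. X n j) \<longlonglongrightarrow> (\<Sum>j=1..h. q j)"
    using lim by (intro tendsto_sum) auto
  then have "(\<Sum>j=1..h. q j) = 1"
    using X by (simp add: em_simplex_def LIMSEQ_const_iff)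
  ultimately show ?thesis
    by (simp add: em_simplex_def)
qed

locale em_model =
  fixes h :: nat and t :: "nat \<Rightarrow> real" and W :: "real \<Rightarrow> real" and xi zeta :: "nat \<Rightarrow> nat"
  assumes W_pos: "\<And>j. j \<in> {1..h} \<Longrightarrow> 0 < W (t j)"
    and observed: "\<And>j. j \<in> {1..h} \<Longrightarrow> 1 \<le> xi j + zeta j"
begin

abbreviation S :: "(nat \<Rightarrow> real) \<Rightarrow> nat \<Rightarrow> real" where "S p k \<equiv> em_tail h t W p k"
abbreviation T :: "(nat \<Rightarrow> real) \<Rightarrow> nat \<Rightarrow> real" where "T \<equiv> em_T h t W xi zeta"
abbreviation L :: "(nat \<Rightarrow> real) \<Rightarrow> real" where "L \<equiv> em_lik h t W xi zeta"

definition N :: real where "N = real (\<Sum>i=1..h. zeta i) + real (\<Sum>i=1..h. xi i)"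

definition pos_simplex :: "(nat \<Rightarrow> real) set" where
  "pos_simplex = {p. (\<forall>j\<in>{1..h}. 0 < p j) \<and> (\<Sum>j=1..h. p j) = 1}"

lemma pos_simplexD:
  assumes "p \<in> pos_simplex"
  shows "\<forall>j\<in>{1..h}. 0 < p j" "(\<Sum>j=1..h. p j) = 1" "1 \<le> h"
proof -
  show "\<forall>j\<in>{1..h}. 0 < p j" and sum: "(\<Sum>j=1..h. p j) = 1"
    using assms by (auto simp: pos_simplex_def)
  from sum show "1 \<le> h"
    by (cases h) auto
qed

lemma pos_simplex_subset: "pos_simplex \<subseteq> em_simplex h"
  by (auto simp: pos_simplex_def em_simplex_def less_imp_le)

lemma T_eq: "T p j = (xi j + p j / W (t j) * (\<Sum>k=1..j. zeta k / S p k)) / N"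
  unfolding em_T_def N_def by simp

lemma N_pos:
  assumes "1 \<le> h"
  shows "0 < N"
proof -
  have "1 \<le> xi 1 + zeta 1"
    using observed assms by auto
  also have "\<dots> \<le> (\<Sum>i=1..h. xi i) + (\<Sum>i=1..h. zeta i)"
    using assms by (intro add_mono member_le_sum) auto
  finally show ?thesis
    unfolding N_def by linarith
qed

lemma S_pos:
  assumes "\<forall>j\<in>{1..h}. 0 < p j" "k \<in> {1..h}"
  shows "0 < S p k"
  unfolding em_tail_def using assms W_pos by (intro sum_pos) auto

lemma S_nonneg:
  assumes "\<forall>j\<in>{1..h}. 0 \<le> p j" "1 \<le> k"
  shows "0 \<le> S p k"
  unfolding em_tail_def using assms W_pos by (intro sum_nonneg) (auto intro!: divide_nonneg_pos)

lemma S_split: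
  assumes "k \<in> {1..h}"
  shows "S p k = p k / W (t k) + (\<Sum>l=Suc k..h. p l / W (t l))"
  unfolding em_tail_def using assms by (simp add: sum.atLeast_Suc_atMost)

text \<open>The redistribution identity: spreading a_k over the tail k..h with weights
  p_j / (W(t_j) S_k(p)) preserves the total mass.\<close>
lemma em_redistribute:
  assumes "\<forall>j\<in>{1..h}. 0 < p j"
  shows "(\<Sum>j=1..h. p j / W (t j) * (\<Sum>k=1..j. a k / S p k)) = (\<Sum>k=1..h. a k)"
proof -
  have "(\<Sum>j=1..h. p j / W (t j) * (\<Sum>k=1..j. a k / S p k))
      = (\<Sum>j=1..h. \<Sum>k=1..j. a k / S p k * (p j / W (t j)))"
    by (simp add: sum_distrib_left mult.commute)
  also have "\<dots> = (\<Sum>k=1..h. \<Sum>j=k..h. a k / S p k * (p j / W (t j)))"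
    by (rule sum_triangle_swap)
  also have "\<dots> = (\<Sum>k=1..h. a k / S p k * S p k)"
    unfolding em_tail_def by (simp add: sum_distrib_left)
  also have "\<dots> = (\<Sum>k=1..h. a k)"
    using S_pos[OF assms] by (intro sum.cong) (auto simp: less_imp_neq[symmetric])
  finally show ?thesis .
qed

text \<open>Every observation contributes, so T(p) is positive whenever p is.\<close>
lemma T_pos:
  assumes p: "\<forall>j\<in>{1..h}. 0 < p j" and j: "j \<in> {1..h}"
  shows "0 < T p j"
proof -
  have pj: "0 < p j / W (t j)"
    using p j W_pos by auto
  have terms: "0 \<le> zeta k / S p k" if "k \<in> {1..j}" for k
  proof -
    have "0 < S p k"
      using S_pos[OF p] that j by auto
    then show ?thesis by simp
  qed
  have "0 < xi j + p j / W (t j) * (\<Sum>k=1..j. zeta k / S p k)"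
  proof (cases "xi j = 0")
    case True
    then have "0 < zeta j / S p j"
      using observed[OF j] S_pos[OF p j] by auto
    also have "\<dots> \<le> (\<Sum>k=1..j. zeta k / S p k)"
      using terms j by (intro member_le_sum) auto
    finally have "0 < (\<Sum>k=1..j. zeta k / S p k)" .
    then have "0 < p j / W (t j) * (\<Sum>k=1..j. zeta k / S p k)"
      using pj by (intro mult_pos_pos)
    then show ?thesis
      by (simp add: add_nonneg_pos)
  next
    case False
    moreover have "0 \<le> p j / W (t j) * (\<Sum>k=1..j. zeta k / S p k)"
      using pj terms by (intro mult_nonneg_nonneg sum_nonneg) auto
    ultimately show ?thesis
      by (simp add: add_pos_nonneg)
  qed
  then show ?thesis
    unfolding T_eq using N_pos j by simp
qed

text \<open>T maps the open simplex into itself (total mass is preserved by em_redistribute).\<close>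
lemma T_pos_simplex:
  assumes "p \<in> pos_simplex"
  shows "T p \<in> pos_simplex"
proof -
  note p = pos_simplexD[OF assms]
  have "(\<Sum>j=1..h. T p j) = (\<Sum>j=1..h. xi j + p j / W (t j) * (\<Sum>k=1..j. zeta k / S p k)) / N"
    unfolding T_eq by (simp add: sum_divide_distrib)
  also have "\<dots> = ((\<Sum>j=1..h. xi j) + (\<Sum>k=1..h. zeta k)) / N"
    using em_redistribute[of p "\<lambda>k. real (zeta k)"] p by (simp add: sum.distrib)
  also have "\<dots> = 1"
    using N_pos[OF p(3)] unfolding N_def by simp
  finally show ?thesis
    using T_pos p unfolding pos_simplex_def by auto
qed

lemma iterates_pos_simplex:
  assumes "p \<in> pos_simplex"
  shows "(T ^^ n) p \<in> pos_simplex"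
  by (induction n) (use assms T_pos_simplex in auto)

lemma L_factor_pos:
  assumes "\<forall>j\<in>{1..h}. 0 < p j" "j \<in> {1..h}"
  shows "0 < p j ^ xi j * S p j ^ zeta j"
  using assms S_pos[OF assms] by simp

lemma L_pos:
  assumes "\<forall>j\<in>{1..h}. 0 < p j"
  shows "0 < L p"
  unfolding em_lik_def using L_factor_pos[OF assms] by (intro prod_pos) blast

lemma ln_L:
  assumes "\<forall>j\<in>{1..h}. 0 < p j"
  shows "ln (L p) = (\<Sum>j=1..h. xi j * ln (p j) + zeta j * ln (S p j))"
proof -
  have "ln (L p) = (\<Sum>j=1..h. ln (p j ^ xi j * S p j ^ zeta j))"
    unfolding em_lik_def by (intro ln_prod finite_atLeastAtMost) (metis L_factor_pos[OF assms] less_irrefl)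
  also have "\<dots> = (\<Sum>j=1..h. xi j * ln (p j) + zeta j * ln (S p j))"
  proof (intro sum.cong refl)
    fix j assume j: "j \<in> {1..h}"
    then have "0 < p j" "0 < S p j"
      using assms S_pos[OF assms j] by auto
    then show "ln (p j ^ xi j * S p j ^ zeta j) = xi j * ln (p j) + zeta j * ln (S p j)"
      by (simp add: ln_mult ln_realpow)
  qed
  finally show ?thesis .
qed

lemma L_continuous:
  assumes "\<forall>j\<in>{1..h}. (\<lambda>n. X n j) \<longlonglongrightarrow> q j"
  shows "(\<lambda>n. L (X n)) \<longlonglongrightarrow> L q"
  unfolding em_lik_def em_tail_def using assms W_pos
  by (intro tendsto_prod tendsto_mult tendsto_power tendsto_sum tendsto_divide tendsto_const)
     (auto simp: less_imp_neq[symmetric])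

text \<open>One censored term of the ascent inequality: ln x <= x - 1 applied to
  x = p_j S_k(P) / (T(p)_j S_k(p)).\<close>
lemma em_censored_term_bound:
  assumes P: "\<forall>i\<in>{1..h}. 0 < P i" and p: "\<forall>i\<in>{1..h}. 0 < p i"
    and j: "j \<in> {1..h}" and k: "k \<in> {1..j}"
  defines "c \<equiv> zeta k * (P j / W (t j)) / S P k"
  shows "c - P j / T p j * (p j / W (t j) * (zeta k / S p k))
    \<le> c * (ln (T p j) - ln (p j)) - P j / W (t j) * (zeta k * (ln (S P k) - ln (S p k)) / S P k)"
proof -
  have pos: "0 < P j" "0 < p j" "0 < W (t j)" "0 < T p j" "0 < S P k" "0 < S p k"
    using P p j k W_pos T_pos[OF p j] S_pos[OF P] S_pos[OF p] by auto
  have "c - c * (p j * S P k) / (T p j * S p k) \<le> c * (ln (T p j * S p k) - ln (p j * S P k))"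
    using pos by (intro ln_ratio_lower_bound) (auto simp: c_def)
  moreover have "c * (p j * S P k) / (T p j * S p k) = P j / T p j * (p j / W (t j) * (zeta k / S p k))"
    using pos by (simp add: c_def field_simps)
  moreover have "c * (ln (T p j * S p k) - ln (p j * S P k))
      = c * (ln (T p j) - ln (p j)) - P j / W (t j) * (zeta k * (ln (S P k) - ln (S p k)) / S P k)"
    using pos by (simp add: c_def ln_mult field_simps)
  ultimately show ?thesis
    by simp
qed

lemma em_pointwise_bound:
  assumes P: "P \<in> pos_simplex" and p: "p \<in> pos_simplex" and j: "j \<in> {1..h}"
  shows "N * (T P j - P j) \<le> N * T P j * (ln (T p j) - ln (p j)) - xi j * (ln (P j) - ln (p j))
           - P j / W (t j) * (\<Sum>k=1..j. zeta k * (ln (S P k) - ln (S p k)) / S P k)"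
proof -
  note P' = pos_simplexD[OF P] and p' = pos_simplexD[OF p]
  define y where "y = T p j"
  define A where "A = (\<Sum>k=1..j. zeta k * (P j / W (t j)) / S P k)"
  define X where "X = p j / W (t j) * (\<Sum>k=1..j. zeta k / S p k)"
  define D where "D = (\<Sum>k=1..j. zeta k * (ln (S P k) - ln (S p k)) / S P k)"
  have Pj: "0 < P j" and yj: "0 < y"
    using P'(1) j T_pos[OF p'(1) j] by (auto simp: y_def)
  have xi_part: "xi j - P j / y * xi j \<le> xi j * (ln y - ln (p j)) - xi j * (ln (P j) - ln (p j))"
    using ln_ratio_lower_bound[of "xi j" "P j" y] Pj yj by (simp add: algebra_simps)
  have "(\<Sum>k=1..j. zeta k * (P j / W (t j)) / S P k - P j / y * (p j / W (t j) * (zeta k / S p k)))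
      \<le> (\<Sum>k=1..j. zeta k * (P j / W (t j)) / S P k * (ln y - ln (p j))
            - P j / W (t j) * (zeta k * (ln (S P k) - ln (S p k)) / S P k))"
    unfolding y_def using em_censored_term_bound[OF P'(1) p'(1) j] by (intro sum_mono) blast
  then have censored_part: "A - P j / y * X \<le> A * (ln y - ln (p j)) - P j / W (t j) * D"
    unfolding A_def X_def D_def by (simp add: sum_subtractf sum_distrib_left sum_distrib_right)
  have "N * T P j = xi j + A"
    unfolding T_eq A_def using N_pos[OF P'(3)] by (simp add: sum_distrib_left mult.commute)
  then have NTP: "N * T P j * (ln y - ln (p j)) = xi j * (ln y - ln (p j)) + A * (ln y - ln (p j))"
    "N * T P j = xi j + A"
    by (simp_all add: algebra_simps)
  have Ny: "N * y = xi j + X"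
    unfolding y_def T_eq X_def using N_pos[OF P'(3)] by simp
  have "N * P j = P j / y * (N * y)"
    using yj by simp
  then have NP: "N * P j = P j / y * xi j + P j / y * X"
    unfolding Ny by (simp add: distrib_left)
  show ?thesis
    using xi_part censored_part NTP NP unfolding y_def[symmetric] D_def[symmetric]
    by (simp add: right_diff_distrib)
qed

text \<open>The ascent inequality: summing em_pointwise_bound over j, the left-hand sides cancel
  (both T(P) and P are probability vectors) and the right-hand sides assemble to ln L(P) - ln L(p).\<close>
lemma em_ascent:
  assumes P: "P \<in> pos_simplex" and p: "p \<in> pos_simplex"
  shows "ln (L P) - ln (L p) \<le> N * (\<Sum>j=1..h. T P j * (ln (T p j) - ln (p j)))"
proof -
  note P' = pos_simplexD[OF P] and p' = pos_simplexD[OF p] and TP = pos_simplexD[OF T_pos_simplex[OF P]]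
  define D where "D k = zeta k * (ln (S P k) - ln (S p k))" for k
  have "0 = N * (\<Sum>j=1..h. T P j) - N * (\<Sum>j=1..h. P j)"
    using TP(2) P'(2) by simp
  also have "\<dots> = (\<Sum>j=1..h. N * (T P j - P j))"
    by (simp add: sum_distrib_left sum_subtractf right_diff_distrib)
  also have "\<dots> \<le> (\<Sum>j=1..h. N * T P j * (ln (T p j) - ln (p j)) - xi j * (ln (P j) - ln (p j))
           - P j / W (t j) * (\<Sum>k=1..j. D k / S P k))"
    unfolding D_def by (intro sum_mono em_pointwise_bound[OF P p]) (simp add: mult.assoc)
  also have "\<dots> = N * (\<Sum>j=1..h. T P j * (ln (T p j) - ln (p j)))
      - (\<Sum>j=1..h. xi j * (ln (P j) - ln (p j))) - (\<Sum>k=1..h. D k)"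
    using em_redistribute[OF P'(1), of D] by (simp add: sum_subtractf sum_distrib_left mult.assoc)
  also have "\<dots> = N * (\<Sum>j=1..h. T P j * (ln (T p j) - ln (p j))) - (ln (L P) - ln (L p))"
    unfolding ln_L[OF P'(1)] ln_L[OF p'(1)] D_def by (simp add: sum.distrib sum_subtractf algebra_simps)
  finally show ?thesis
    by simp
qed

lemma L_iterates_LIMSEQ:
  assumes P: "P \<in> pos_simplex" and P_max: "\<forall>q\<in>em_simplex h. L q \<le> L P"
    and p0: "p0 \<in> pos_simplex"
  shows "(\<lambda>n. L ((T ^^ n) p0)) \<longlonglongrightarrow> L P"
proof -
  define p where "p n = (T ^^ n) p0" for n
  define V where "V n = - N * (\<Sum>j=1..h. T P j * ln (p n j))" for n
  note P' = pos_simplexD[OF P] and TP = pos_simplexD[OF T_pos_simplex[OF P]]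
  have p': "p n \<in> pos_simplex" for n
    unfolding p_def using p0 by (rule iterates_pos_simplex)
  have "(\<lambda>n. ln (L P) - ln (L (p n))) \<longlonglongrightarrow> 0"
  proof (rule descent_LIMSEQ_zero)
    show "0 \<le> ln (L P) - ln (L (p n))" for n
    proof -
      have "L (p n) \<le> L P"
        using P_max pos_simplex_subset p' by blast
      moreover have "0 < L (p n)"
        using L_pos pos_simplexD(1)[OF p'] by blast
      ultimately show ?thesis
        by simp
    qed
    show "ln (L P) - ln (L (p n)) \<le> V n - V (Suc n)" for n
      using em_ascent[OF P p'[of n]]
      by (simp add: V_def p_def sum_subtractf right_diff_distrib algebra_simps)
    show "- N * (\<Sum>j=1..h. T P j * ln (T P j)) \<le> V n" for n
      using gibbs_inequality[of "{1..h}" "T P" "p n"] TP pos_simplexD[OF p'[of n]]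
        N_pos[OF P'(3)] by (simp add: V_def)
  qed
  then have "(\<lambda>n. ln (L (p n))) \<longlonglongrightarrow> ln (L P)"
    using tendsto_diff[OF tendsto_const[of "ln (L P)"]] by fastforce
  then have "(\<lambda>n. exp (ln (L (p n)))) \<longlonglongrightarrow> exp (ln (L P))"
    by (rule tendsto_exp)
  then show ?thesis
    using L_pos P'(1) pos_simplexD(1)[OF p'] by (simp add: p_def)
qed

lemma S_midpoint: "S (\<lambda>j. (p j + q j) / 2) k = (S p k + S q k) / 2"
proof -
  have "(\<Sum>l=k..h. (p l + q l) / 2 / W (t l)) = (\<Sum>l=k..h. (p l / W (t l) + q l / W (t l)) / 2)"
    by (intro sum.cong refl) (simp add: add_divide_distrib)
  then show ?thesis
    unfolding em_tail_def by (simp add: sum.distrib sum_divide_distrib[symmetric])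
qed

lemma L_mult: "L p * L q = (\<Prod>j=1..h. (p j * q j) ^ xi j * (S p j * S q j) ^ zeta j)"
  unfolding em_lik_def by (simp add: prod.distrib[symmetric] power_mult_distrib mult_ac)

text \<open>Two points agree if they agree at every t_j with an uncensored observation and have equal
  tails at every t_j with a censored one (backward induction from t_h).\<close>
lemma eq_if_observed_factors_eq:
  assumes "\<forall>j\<in>{1..h}. (0 < xi j \<longrightarrow> p j = q j) \<and> (0 < zeta j \<longrightarrow> S p j = S q j)"
  shows "\<forall>j\<in>{1..h}. p j = q j"
proof -
  have "\<forall>l\<in>{k..h}. p l = q l" if k: "1 \<le> k" "k \<le> Suc h" for k
    using k(2)
  proof (induction rule: inc_induct)
    case base
    then show ?case by simp
  next
    case (step n)
    then have n: "n \<in> {1..h}"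
      using k(1) by simp
    have "p n = q n"
    proof (cases "0 < xi n")
      case True
      then show ?thesis
        using assms n by blast
    next
      case False
      then have "S p n = S q n"
        using assms observed[OF n] n by auto
      moreover have "(\<Sum>l=Suc n..h. p l / W (t l)) = (\<Sum>l=Suc n..h. q l / W (t l))"
        using step.IH by (intro sum.cong) auto
      ultimately have "p n / W (t n) = q n / W (t n)"
        using S_split[OF n, of p] S_split[OF n, of q] by simp
      then show ?thesis
        using W_pos[OF n] by simp
    qed
    then show ?case
      using step.IH by (metis atLeastAtMost_iff le_antisym not_less_eq_eq)
  qed
  from this[of 1] show ?thesis
    by simp
qed

lemma midpoint_factor_le:
  assumes "p \<in> em_simplex h" "q \<in> em_simplex h" "j \<in> {1..h}"
  defines "m \<equiv> \<lambda>i. (p i + q i) / 2"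
  shows "0 \<le> (p j * q j) ^ xi j * (S p j * S q j) ^ zeta j"
    and "(p j * q j) ^ xi j * (S p j * S q j) ^ zeta j \<le> (m j * m j) ^ xi j * (S m j * S m j) ^ zeta j"
proof -
  have nonneg: "0 \<le> p j" "0 \<le> q j" "0 \<le> S p j" "0 \<le> S q j"
    using assms S_nonneg by (auto simp: em_simplex_def)
  then show "0 \<le> (p j * q j) ^ xi j * (S p j * S q j) ^ zeta j"
    by simp
  show "(p j * q j) ^ xi j * (S p j * S q j) ^ zeta j \<le> (m j * m j) ^ xi j * (S m j * S m j) ^ zeta j"
    unfolding m_def S_midpoint using nonneg by (intro mult_mono amgm_power) auto
qed

lemma L_mult_le_midpoint:
  assumes "p \<in> em_simplex h" "q \<in> em_simplex h"
  defines "m \<equiv> \<lambda>i. (p i + q i) / 2"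
  shows "L p * L q \<le> L m * L m"
  unfolding L_mult m_def using midpoint_factor_le[OF assms(1,2)]
  by (intro prod_mono) auto

lemma L_mult_eq_midpoint:
  assumes p: "p \<in> em_simplex h" and q: "q \<in> em_simplex h"
  defines "m \<equiv> \<lambda>i. (p i + q i) / 2"
  assumes pos: "0 < L p * L q" and eq: "L p * L q = L m * L m"
  shows "\<forall>j\<in>{1..h}. (0 < xi j \<longrightarrow> p j = q j) \<and> (0 < zeta j \<longrightarrow> S p j = S q j)"
proof
  fix j assume j: "j \<in> {1..h}"
  define g where "g i = (p i * q i) ^ xi i * (S p i * S q i) ^ zeta i" for i
  define G where "G i = (m i * m i) ^ xi i * (S m i * S m i) ^ zeta i" for i
  have g_pos: "0 < g i" if "i \<in> {1..h}" for i
  proof -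
    have "prod g {1..h} \<noteq> 0"
      using pos unfolding L_mult g_def[symmetric] by linarith
    then have "g i \<noteq> 0"
      using that by simp
    then show ?thesis
      using midpoint_factor_le(1)[OF p q that] unfolding g_def by linarith
  qed
  have "\<forall>i\<in>{1..h}. g i = G i"
    using g_pos midpoint_factor_le(2)[OF p q] eq unfolding L_mult g_def G_def m_def
    by (intro prod_eq_factors) auto
  then have "(p j * q j) ^ xi j * (S p j * S q j) ^ zeta j
      = ((p j + q j) / 2 * ((p j + q j) / 2)) ^ xi j * ((S p j + S q j) / 2 * ((S p j + S q j) / 2)) ^ zeta j"
    using j unfolding g_def G_def m_def S_midpoint by simp
  moreover have "0 \<le> p j" "0 \<le> q j" "0 \<le> S p j" "0 \<le> S q j"
    using p q j S_nonneg by (auto simp: em_simplex_def)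
  ultimately show "(0 < xi j \<longrightarrow> p j = q j) \<and> (0 < zeta j \<longrightarrow> S p j = S q j)"
    using amgm_factors_eq g_pos[OF j] unfolding g_def by blast
qed

text \<open>A maximizer with positive likelihood is unique: for another maximizer q the midpoint would
  give L(P) L(q) < L(m)^2 unless all observed factors agree.\<close>
lemma maximizer_unique:
  assumes P: "P \<in> em_simplex h" "0 < L P" and P_max: "\<forall>q\<in>em_simplex h. L q \<le> L P"
    and q: "q \<in> em_simplex h" "L q = L P"
  shows "\<forall>j\<in>{1..h}. q j = P j"
proof -
  define m where "m i = (P i + q i) / 2" for i
  have m: "m \<in> em_simplex h"
    using P(1) q(1) by (auto simp: em_simplex_def m_def sum.distrib sum_divide_distrib[symmetric])
  have "0 \<le> L m"
    using m S_nonneg[of m] unfolding em_lik_def em_simplex_def by (force intro!: prod_nonneg)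
  then have "L m * L m \<le> L P * L q"
    using P_max m q(2) by (intro mult_mono) auto
  moreover have "L P * L q \<le> L m * L m"
    unfolding m_def using P(1) q(1) by (rule L_mult_le_midpoint)
  ultimately have "L P * L q = L m * L m"
    by linarith
  moreover have "0 < L P * L q"
    using P(2) q(2) by simp
  ultimately have "\<forall>j\<in>{1..h}. (0 < xi j \<longrightarrow> P j = q j) \<and> (0 < zeta j \<longrightarrow> S P j = S q j)"
    using L_mult_eq_midpoint[OF P(1) q(1)] unfolding m_def by blast
  then show ?thesis
    using eq_if_observed_factors_eq[of P q] by auto
qed

text \<open>Convergence of the EM iterates: any subsequential limit maximizes L, hence equals P.\<close>
lemma iterates_converge:
  assumes P: "P \<in> pos_simplex" and P_max: "\<forall>q\<in>em_simplex h. L q \<le> L P"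
    and p0: "p0 \<in> pos_simplex"
  shows "\<forall>j\<in>{1..h}. (\<lambda>n. (T ^^ n) p0 j) \<longlonglongrightarrow> P j"
proof (rule coordinates_LIMSEQ_by_subseq_limits[where B = 1])
  have iterates: "(T ^^ n) p0 \<in> em_simplex h" for n
    using iterates_pos_simplex[OF p0] pos_simplex_subset by blast
  show "finite {1..h}"
    by simp
  show "\<forall>n. \<forall>j\<in>{1..h}. \<bar>(T ^^ n) p0 j\<bar> \<le> 1"
    using em_simplex_coord_bound iterates by blast
  fix r q
  assume r: "strict_mono r" and q: "\<forall>j\<in>{1..h}. (\<lambda>n. (T ^^ r n) p0 j) \<longlonglongrightarrow> q j"
  have q_simplex: "q \<in> em_simplex h"
    using iterates q by (rule em_simplex_limit)
  have "(\<lambda>n. L ((T ^^ r n) p0)) \<longlonglongrightarrow> L q"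
    using q by (rule L_continuous)
  moreover have "((\<lambda>n. L ((T ^^ n) p0)) \<circ> r) \<longlonglongrightarrow> L P"
    using L_iterates_LIMSEQ[OF P P_max p0] r by (rule LIMSEQ_subseq_LIMSEQ)
  ultimately have "L q = L P"
    by (simp add: o_def LIMSEQ_unique)
  then show "\<forall>j\<in>{1..h}. q j = P j"
    using maximizer_unique[OF _ _ P_max q_simplex] P pos_simplex_subset L_pos pos_simplexD(1)
    by blast
qed

end

text \<open>The main theorem: the positive ordered times make every W(t_j) positive, which places us
  in the locale em_model.\<close>
theorem mainTheorem3:
  fixes h :: nat and t :: "nat \<Rightarrow> real" and W :: "real \<Rightarrow> real"
    and xi zeta :: "nat \<Rightarrow> nat" and pstar p0 :: "nat \<Rightarrow> real"
  assumes t_pos: "0 < t 1"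
    and t_mono: "\<forall>i\<in>{1..h}. \<forall>j\<in>{1..h}. i < j \<longrightarrow> t i < t j"
    and W_pos: "\<forall>x>0. 0 < W x"
    and W_mono: "mono_on {0<..} W"
    and obs: "\<forall>j\<in>{1..h}. 1 \<le> xi j + zeta j"
    and pstar_in: "pstar \<in> em_simplex h"
    and pstar_max: "\<forall>q\<in>em_simplex h. em_lik h t W xi zeta q \<le> em_lik h t W xi zeta pstar"
    and pstar_pos: "\<forall>j\<in>{1..h}. 0 < pstar j"
    and p0_in: "p0 \<in> em_simplex h"
    and p0_pos: "\<forall>j\<in>{1..h}. 0 < p0 j"
  shows "\<forall>j\<in>{1..h}. (\<lambda>k. ((em_T h t W xi zeta) ^^ k) p0 j) \<longlonglongrightarrow> pstar j"
proof -
  have "0 < t j" if "j \<in> {1..h}" for j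
    using t_pos t_mono that by (cases "j = 1") (auto intro: less_trans)
  then interpret em_model h t W xi zeta
    using W_pos obs by unfold_locales auto
  have "pstar \<in> pos_simplex" "p0 \<in> pos_simplex"
    using pstar_in pstar_pos p0_in p0_pos by (auto simp: pos_simplex_def em_simplex_def)
  then show ?thesis
    using iterates_converge pstar_max by blast
qed

end
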